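(* For every $m\ge0$ and $t,\theta\in\mathbb N_0$ with $t\le\theta$, almost surely $$\sigma(t;m)>\theta\iff V(s;m)>m\ \text{for all } s=t,\dots,\theta\iff m<\underline M(t,\theta).$$
   Context: $(\Omega,\mathcal F,\mathbb P)$ complete with filtration $\{\mathcal F(t)\}_{t\in\mathbb N_0}$; $\beta\in(0,1)$; $\{h(t)\}_{t\in\mathbb N}$ positive, predictable ($h(t)$ is $\mathcal F(t-1)$-measurable), with $\mathbb E[\sum_{t\ge0}\beta^th(t+1)]<\infty$. $\mathcal S(t)$: stopping times with values in $\{t,t+1,\dots\}\cup\{\infty\}$; $\beta^\infty:=0$. For $m\ge0$: $V(t;m):=\operatorname{ess\,sup}_{\tau\in\mathcal S(t)}\mathbb E[\sum_{u=t}^{\tau-1}\beta^{u-t}h(u+1)+m\beta^{\tau-t}\mid\mathcal F(t)]$ (a.s. continuous in $m$, so it may be evaluated at random $m$); $\sigma(t;m):=\inf\{\theta\ge t:V(\theta;m)=m\}$ ($\inf\emptyset=\infty$). Gittins index $M(t):=\operatorname{ess\,sup}\{X>0\ \mathcal F(t)\text{-measurable}:V(t;X)\ge X\}$; $\underline M(t,\theta):=\min_{t\le u\le\theta}M(u)$. *)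

theory Defs
  imports "HOL-Probability.Probability"
begin

definition ess_sup_fam :: "'a measure \<Rightarrow> 'a measure \<Rightarrow> ('a \<Rightarrow> ennreal) set \<Rightarrow> ('a \<Rightarrow> ennreal)" where
  "ess_sup_fam M G S = (SOME Y. Y \<in> borel_measurable G
      \<and> (\<forall>X\<in>S. AE x in M. X x \<le> Y x)
      \<and> (\<forall>Z\<in>borel_measurable G. (\<forall>X\<in>S. AE x in M. X x \<le> Z x) \<longrightarrow> (AE x in M. Y x \<le> Z x)))"

definition stopping_times_from :: "'a measure \<Rightarrow> (nat \<Rightarrow> 'a measure) \<Rightarrow> nat \<Rightarrow> ('a \<Rightarrow> enat) set" where
  "stopping_times_from M F t = {\<tau>. (\<forall>n::nat. Measurable.pred (F n) (\<lambda>x. \<tau> x \<le> enat n))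
      \<and> (\<forall>x\<in>space M. enat t \<le> \<tau> x)}"

definition disc :: "real \<Rightarrow> nat \<Rightarrow> enat \<Rightarrow> real" where
  "disc \<beta> t k = (case k of enat n \<Rightarrow> \<beta> ^ (n - t) | \<infinity> \<Rightarrow> 0)"

definition payoff :: "real \<Rightarrow> (nat \<Rightarrow> 'a \<Rightarrow> real) \<Rightarrow> nat \<Rightarrow> ('a \<Rightarrow> real) \<Rightarrow> ('a \<Rightarrow> enat) \<Rightarrow> 'a \<Rightarrow> ennreal" where
  "payoff \<beta> h t m \<tau> x =
     (\<Sum>u. ennreal (if t \<le> u \<and> enat u < \<tau> x then \<beta> ^ (u - t) * h (Suc u) x else 0))
     + ennreal (m x * disc \<beta> t (\<tau> x))"

definition Vfun :: "'a measure \<Rightarrow> (nat \<Rightarrow> 'a measure) \<Rightarrow> real \<Rightarrow> (nat \<Rightarrow> 'a \<Rightarrow> real)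
    \<Rightarrow> nat \<Rightarrow> ('a \<Rightarrow> real) \<Rightarrow> 'a \<Rightarrow> ennreal" where
  "Vfun M F \<beta> h t m = ess_sup_fam M (F t)
      ((\<lambda>\<tau>. nn_cond_exp M (F t) (payoff \<beta> h t m \<tau>)) ` stopping_times_from M F t)"

definition sigma_opt :: "'a measure \<Rightarrow> (nat \<Rightarrow> 'a measure) \<Rightarrow> real \<Rightarrow> (nat \<Rightarrow> 'a \<Rightarrow> real)
    \<Rightarrow> nat \<Rightarrow> real \<Rightarrow> 'a \<Rightarrow> enat" where
  "sigma_opt M F \<beta> h t m x =
     (if \<exists>\<theta>\<ge>t. Vfun M F \<beta> h \<theta> (\<lambda>_. m) x = ennreal m
      then enat (LEAST \<theta>. t \<le> \<theta> \<and> Vfun M F \<beta> h \<theta> (\<lambda>_. m) x = ennreal m)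
      else \<infinity>)"

definition gittins :: "'a measure \<Rightarrow> (nat \<Rightarrow> 'a measure) \<Rightarrow> real \<Rightarrow> (nat \<Rightarrow> 'a \<Rightarrow> real)
    \<Rightarrow> nat \<Rightarrow> 'a \<Rightarrow> ennreal" where
  "gittins M F \<beta> h t = ess_sup_fam M (F t)
      ((\<lambda>X x. ennreal (X x)) ` {X. X \<in> borel_measurable (F t) \<and> (\<forall>x\<in>space M. 0 < X x)
           \<and> (AE x in M. ennreal (X x) < Vfun M F \<beta> h t X x)})"

definition gittins_low :: "'a measure \<Rightarrow> (nat \<Rightarrow> 'a measure) \<Rightarrow> real \<Rightarrow> (nat \<Rightarrow> 'a \<Rightarrow> real)
    \<Rightarrow> nat \<Rightarrow> nat \<Rightarrow> 'a \<Rightarrow> ennreal" where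
  "gittins_low M F \<beta> h t \<theta> x = (MIN u\<in>{t..\<theta>}. gittins M F \<beta> h u x)"

end

theory Submission
  imports Defs
begin

text \<open>
  Stopping at once shows V(s;m) \<ge> m, so \<sigma>(t;m) > \<theta> just says V(s;m) \<noteq> m for s = t..\<theta>;
  it remains to show, for each s, that V(s;m) > m iff M(s) > m almost surely.
  A payoff depends on the retirement level X only through X \<beta>^(\<tau>-s) with \<beta>^(\<tau>-s) \<le> 1, whence
  V(s;X) \<le> V(s;m) + max 0 (X - m). As M(s) is the essential supremum of a countable subfamily of
  the admissible levels X (those with V(s;X) > X), M(s) > m yields such an X > m and thus V(s;m) > m.
  Conversely, if V(s;m) > m, pick a rational c slightly above m, so that V(s;c) \<ge> V(s;m) > c;
  the level equal to c where V(s;c) > c and to h(s+1)/2 elsewhere is admissible, because never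
  stopping earns at least h(s+1). Hence M(s) \<ge> c > m.
\<close>

lemma countable_subfamily_AE_exceeds:
  fixes S :: "('a \<Rightarrow> ennreal) set" and q :: ennreal
  assumes "finite_measure M" and S: "S \<subseteq> borel_measurable M"
  shows "\<exists>J. countable J \<and> J \<subseteq> S \<and> (\<forall>X\<in>S. AE x in M. q < X x \<longrightarrow> (\<exists>Y\<in>J. q < Y x))"
proof -
  interpret finite_measure M by fact
  define U where "U J = (\<Union>Y\<in>J. {x\<in>space M. q < Y x})" for J :: "('a \<Rightarrow> ennreal) set"
  let ?C = "{J. countable J \<and> J \<subseteq> S}"
  have U_sets: "U J \<in> sets M" if "J \<in> ?C" for J
    unfolding U_def using that S by (intro sets.countable_UN') auto
  define c where "c = (SUP J\<in>?C. emeasure M (U J))"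
  \<comment> \<open>c is attained by a countable J, which no X \<in> S can enlarge on a non-null set\<close>
  obtain f :: "nat \<Rightarrow> ennreal" where f: "range f \<subseteq> (\<lambda>J. emeasure M (U J)) ` ?C" "c = Sup (range f)"
    using ennreal_SUP_countable_SUP[of ?C "\<lambda>J. emeasure M (U J)"] unfolding c_def by blast
  have "\<forall>n. \<exists>J\<in>?C. f n = emeasure M (U J)" using f(1) by blast
  then obtain Jn where Jn: "\<And>n. Jn n \<in> ?C" "\<And>n. f n = emeasure M (U (Jn n))"
    by metis
  define J where "J = (\<Union>n. Jn n)"
  have J: "J \<in> ?C" using Jn(1) unfolding J_def by auto
  have c_le: "c \<le> emeasure M (U J)"
    unfolding f(2) Jn(2) using Jn(1) J U_sets
    by (auto intro!: Sup_least emeasure_mono simp: U_def J_def)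
  have "AE x in M. q < X x \<longrightarrow> (\<exists>Y\<in>J. q < Y x)" if X: "X \<in> S" for X
  proof -
    define B where "B = {x\<in>space M. q < X x}"
    have B: "B \<in> sets M" unfolding B_def using X S by auto
    have "emeasure M (U J) + emeasure M (B - U J) = emeasure M (U J \<union> (B - U J))"
      using U_sets[OF J] B by (intro plus_emeasure) auto
    also have "U J \<union> (B - U J) = U (insert X J)" unfolding U_def B_def by auto
    also have "emeasure M (U (insert X J)) \<le> c"
      unfolding c_def using J X by (intro SUP_upper) auto
    also note c_le
    finally have "emeasure M (U J) + emeasure M (B - U J) \<le> emeasure M (U J) + 0"
      by simp
    then have "emeasure M (B - U J) = 0"
      using U_sets[OF J] by (simp add: emeasure_eq_measure ennreal_add_left_cancel_le)
    then have "B - U J \<in> null_sets M" using B U_sets[OF J] by auto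
    from AE_not_in[OF this] AE_space show ?thesis
      by eventually_elim (auto simp: B_def U_def)
  qed
  with J show ?thesis by blast
qed

lemma countable_subfamily_AE_SUP:
  fixes S :: "('a \<Rightarrow> ennreal) set"
  assumes "finite_measure M" and "S \<subseteq> borel_measurable M"
  shows "\<exists>J. countable J \<and> J \<subseteq> S \<and> (\<forall>X\<in>S. AE x in M. X x \<le> (SUP Y\<in>J. Y x))"
proof -
  have "\<exists>Jq. \<forall>r::rat. countable (Jq r) \<and> Jq r \<subseteq> S
      \<and> (\<forall>X\<in>S. AE x in M. ennreal (of_rat r) < X x \<longrightarrow> (\<exists>Y\<in>Jq r. ennreal (of_rat r) < Y x))"
    by (intro choice allI countable_subfamily_AE_exceeds[OF assms])
  then obtain Jq where Jq: "\<And>r. countable (Jq r) \<and> Jq r \<subseteq> S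
      \<and> (\<forall>X\<in>S. AE x in M. ennreal (of_rat r) < X x \<longrightarrow> (\<exists>Y\<in>Jq r. ennreal (of_rat r) < Y x))"
    by blast
  define J where "J = (\<Union>r. Jq r)"
  have "countable J" "J \<subseteq> S" unfolding J_def using Jq by auto
  moreover have "AE x in M. X x \<le> (SUP Y\<in>J. Y x)" if X: "X \<in> S" for X
  proof -
    have "AE x in M. \<forall>r. ennreal (of_rat r) < X x \<longrightarrow> (\<exists>Y\<in>Jq r. ennreal (of_rat r) < Y x)"
      unfolding AE_all_countable using Jq X by blast
    then show ?thesis
    proof eventually_elim
      case (elim x)
      show ?case
      proof (rule ccontr)
        assume "\<not> X x \<le> (SUP Y\<in>J. Y x)"
        then obtain r where r: "(SUP Y\<in>J. Y x) < ennreal (of_rat r)" "ennreal (of_rat r) < X x"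
          using ennreal_rat_dense[of "SUP Y\<in>J. Y x" "X x"] by (auto simp: not_le)
        with elim obtain Y where "Y \<in> J" "ennreal (of_rat r) < Y x" unfolding J_def by blast
        then have "ennreal (of_rat r) < (SUP Y\<in>J. Y x)" by (auto simp: less_SUP_iff)
        with r(1) show False by simp
      qed
    qed
  qed
  ultimately show ?thesis by blast
qed

lemma ess_sup_exists:
  fixes S :: "('a \<Rightarrow> ennreal) set"
  assumes "finite_measure M" and G: "subalgebra M G" and S: "S \<subseteq> borel_measurable G"
  shows "\<exists>Y. Y \<in> borel_measurable G \<and> (\<forall>X\<in>S. AE x in M. X x \<le> Y x)
      \<and> (\<forall>Z\<in>borel_measurable G. (\<forall>X\<in>S. AE x in M. X x \<le> Z x) \<longrightarrow> (AE x in M. Y x \<le> Z x))"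
proof -
  have "S \<subseteq> borel_measurable M" using S measurable_from_subalg[OF G] by blast
  from countable_subfamily_AE_SUP[OF assms(1) this] obtain J
    where J: "countable J" "J \<subseteq> S" "\<forall>X\<in>S. AE x in M. X x \<le> (SUP Y\<in>J. Y x)"
    by (elim exE conjE)
  let ?Y = "\<lambda>x. SUP Y\<in>J. Y x"
  have "?Y \<in> borel_measurable G"
    using J S by (intro borel_measurable_SUP) auto
  moreover have "AE x in M. ?Y x \<le> Z x" if "\<forall>X\<in>S. AE x in M. X x \<le> Z x" for Z
  proof -
    have "AE x in M. \<forall>Y\<in>J. Y x \<le> Z x"
      using J that by (subst AE_ball_countable) auto
    then show ?thesis by eventually_elim (auto intro: SUP_least)
  qed
  ultimately show ?thesis
    using J(3) by (intro exI[of _ ?Y]) simp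
qed

lemma ess_sup_fam_spec:
  fixes S :: "('a \<Rightarrow> ennreal) set"
  assumes "finite_measure M" and "subalgebra M G" and "S \<subseteq> borel_measurable G"
  shows "ess_sup_fam M G S \<in> borel_measurable G
      \<and> (\<forall>X\<in>S. AE x in M. X x \<le> ess_sup_fam M G S x)
      \<and> (\<forall>Z\<in>borel_measurable G. (\<forall>X\<in>S. AE x in M. X x \<le> Z x) \<longrightarrow> (AE x in M. ess_sup_fam M G S x \<le> Z x))"
  unfolding ess_sup_fam_def by (rule someI_ex[OF ess_sup_exists[OF assms]])

context
  fixes M G :: "'a measure" and S :: "('a \<Rightarrow> ennreal) set"
  assumes finite: "finite_measure M" and G: "subalgebra M G" and S: "S \<subseteq> borel_measurable G"
begin

lemma ess_sup_fam_measurable: "ess_sup_fam M G S \<in> borel_measurable G"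
  using ess_sup_fam_spec[OF finite G S] by (rule conjunct1)

lemma ess_sup_fam_upper: "X \<in> S \<Longrightarrow> AE x in M. X x \<le> ess_sup_fam M G S x"
  using ess_sup_fam_spec[OF finite G S] by simp

lemma ess_sup_fam_least:
  "Z \<in> borel_measurable G \<Longrightarrow> (\<And>X. X \<in> S \<Longrightarrow> AE x in M. X x \<le> Z x)
    \<Longrightarrow> AE x in M. ess_sup_fam M G S x \<le> Z x"
  using ess_sup_fam_spec[OF finite G S] by simp

lemma ess_sup_fam_le_countable_SUP:
  "\<exists>J. countable J \<and> J \<subseteq> S \<and> (AE x in M. ess_sup_fam M G S x \<le> (SUP Y\<in>J. Y x))"
proof -
  have "S \<subseteq> borel_measurable M" using S measurable_from_subalg[OF G] by blast
  from countable_subfamily_AE_SUP[OF finite this] obtain J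
    where J: "countable J" "J \<subseteq> S" "\<forall>X\<in>S. AE x in M. X x \<le> (SUP Y\<in>J. Y x)"
    by (elim exE conjE)
  have "(\<lambda>x. SUP Y\<in>J. Y x) \<in> borel_measurable G"
    using J S by (intro borel_measurable_SUP) auto
  with J ess_sup_fam_least show ?thesis by (intro exI[of _ J]) simp
qed

end

lemma disc_nonneg: "0 \<le> \<beta> \<Longrightarrow> 0 \<le> disc \<beta> t k"
  by (simp add: disc_def split: enat.split)

lemma disc_le_one: "0 \<le> \<beta> \<Longrightarrow> \<beta> \<le> 1 \<Longrightarrow> disc \<beta> t k \<le> 1"
  by (simp add: disc_def power_le_one split: enat.split)

lemma payoff_stop_now: "payoff \<beta> h t X (\<lambda>_. enat t) = (\<lambda>x. ennreal (X x))"
proof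
  fix x
  have "(\<lambda>u. ennreal (if t \<le> u \<and> enat u < enat t then \<beta> ^ (u - t) * h (Suc u) x else 0)) = (\<lambda>_. 0)"
    by auto
  then show "payoff \<beta> h t X (\<lambda>_. enat t) x = ennreal (X x)" by (simp add: payoff_def disc_def)
qed

lemma payoff_never_stop_ge: "ennreal (h (Suc t) x) \<le> payoff \<beta> h t X (\<lambda>_. \<infinity>) x"
proof -
  let ?f = "\<lambda>u. ennreal (if t \<le> u \<and> enat u < \<infinity> then \<beta> ^ (u - t) * h (Suc u) x else 0)"
  have "ennreal (h (Suc t) x) = sum ?f {t}" by simp
  also have "\<dots> \<le> suminf ?f" by (rule sum_le_suminf) auto
  also have "\<dots> \<le> payoff \<beta> h t X (\<lambda>_. \<infinity>) x" unfolding payoff_def by simp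
  finally show ?thesis .
qed

lemma payoff_mono:
  assumes "0 \<le> \<beta>" and "Y x \<le> X x"
  shows "payoff \<beta> h t Y \<tau> x \<le> payoff \<beta> h t X \<tau> x"
  using assms unfolding payoff_def
  by (intro add_left_mono ennreal_leI mult_right_mono disc_nonneg)

lemma ennreal_mult_le_plus_excess:
  fixes x m d :: real
  assumes "0 \<le> d" "d \<le> 1" "0 \<le> m"
  shows "ennreal (x * d) \<le> ennreal (m * d) + ennreal (x - m)"
proof (cases "x \<le> m")
  case True
  then have "ennreal (x * d) \<le> ennreal (m * d)"
    using assms by (intro ennreal_leI mult_right_mono)
  then show ?thesis by (simp add: add_increasing2)
next
  case False
  have "(x - m) * d \<le> x - m" using False assms by (intro mult_left_le) auto
  then have "ennreal (x * d) \<le> ennreal (m * d + (x - m))"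
    by (intro ennreal_leI) (simp add: algebra_simps)
  also have "\<dots> = ennreal (m * d) + ennreal (x - m)"
    using False assms by (intro ennreal_plus) auto
  finally show ?thesis .
qed

lemma payoff_le_const_plus_excess:
  assumes "0 \<le> \<beta>" "\<beta> \<le> 1" "0 \<le> m"
  shows "payoff \<beta> h t X \<tau> x \<le> payoff \<beta> h t (\<lambda>_. m) \<tau> x + ennreal (X x - m)"
  unfolding payoff_def add.assoc
  using assms disc_nonneg disc_le_one
  by (intro add_left_mono ennreal_mult_le_plus_excess)

locale gittins_model = prob_space M
  for M :: "'a measure" +
  fixes F :: "nat \<Rightarrow> 'a measure" and \<beta> :: real and h :: "nat \<Rightarrow> 'a \<Rightarrow> real"
  assumes subalg: "\<And>n. subalgebra M (F n)"
    and beta_pos: "0 < \<beta>" and beta_less_1: "\<beta> < 1"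
    and h_pos: "\<And>n x. x \<in> space M \<Longrightarrow> 0 < h n x"
    and h_predictable: "\<And>n. h (Suc n) \<in> borel_measurable (F n)"
begin

lemma sigma_finite_subalgebra_F: "sigma_finite_subalgebra M (F s)"
  using subalg finite_measure_axioms
  by (intro finite_measure_subalgebra_is_sigma_finite)
     (simp add: finite_measure_subalgebra_def finite_measure_subalgebra_axioms_def)

lemmas measurable_F_imp_M = measurable_from_subalg[OF subalg]

lemma space_F: "space (F s) = space M"
  using subalg[of s] by (simp add: subalgebra_def)

lemma stopping_time_le_measurable:
  "\<tau> \<in> stopping_times_from M F s \<Longrightarrow> Measurable.pred M (\<lambda>x. \<tau> x \<le> enat n)"
  unfolding stopping_times_from_def by (auto intro: measurable_F_imp_M)

lemma stopping_time_measurable: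
  assumes "\<tau> \<in> stopping_times_from M F s"
  shows "\<tau> \<in> measurable M (count_space UNIV)"
proof -
  note [measurable] = stopping_time_le_measurable[OF assms]
  have enat_eq: "k = enat n \<longleftrightarrow> k \<le> enat n \<and> (\<forall>i<n. \<not> k \<le> enat i)" for k n
    by (cases k) (auto, metis linorder_neqE_nat less_imp_le not_le)
  have "\<tau> -` {k} \<inter> space M \<in> sets M" for k
  proof -
    have "\<tau> -` {k} \<inter> space M = {x\<in>space M. \<tau> x = k}" by auto
    also have "\<dots> \<in> sets M"
    proof (cases k)
      case (enat n)
      show ?thesis unfolding enat enat_eq by measurable
    next
      case infinity
      have "\<tau> x = \<infinity> \<longleftrightarrow> (\<forall>n. \<not> \<tau> x \<le> enat n)" for x
        by (cases "\<tau> x") auto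
      with infinity show ?thesis by simp measurable
    qed
    finally show ?thesis .
  qed
  then show ?thesis by (simp add: measurable_count_space_eq2_countable)
qed

lemma payoff_measurable:
  assumes \<tau>: "\<tau> \<in> stopping_times_from M F s" and X: "X \<in> borel_measurable M"
  shows "payoff \<beta> h s X \<tau> \<in> borel_measurable M"
proof -
  have [measurable]: "(\<lambda>x. disc \<beta> s (\<tau> x)) \<in> borel_measurable M"
    by (rule measurable_compose[OF stopping_time_measurable[OF \<tau>]]) simp
  note [measurable] = stopping_time_le_measurable[OF \<tau>] measurable_F_imp_M[OF h_predictable] X
  have [measurable]: "Measurable.pred M (\<lambda>x. enat u < \<tau> x)" for u
    unfolding not_le[symmetric] by measurable
  show ?thesis unfolding payoff_def by measurable
qed

lemma Vfun_measurable: "Vfun M F \<beta> h s X \<in> borel_measurable (F s)"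
  unfolding Vfun_def by (rule ess_sup_fam_measurable[OF finite_measure_axioms subalg]) auto

lemma Vfun_upper:
  "\<tau> \<in> stopping_times_from M F s \<Longrightarrow>
    AE x in M. nn_cond_exp M (F s) (payoff \<beta> h s X \<tau>) x \<le> Vfun M F \<beta> h s X x"
  unfolding Vfun_def by (rule ess_sup_fam_upper[OF finite_measure_axioms subalg]) auto

lemma Vfun_least:
  "Z \<in> borel_measurable (F s) \<Longrightarrow>
   (\<And>\<tau>. \<tau> \<in> stopping_times_from M F s \<Longrightarrow> AE x in M. nn_cond_exp M (F s) (payoff \<beta> h s X \<tau>) x \<le> Z x)
   \<Longrightarrow> AE x in M. Vfun M F \<beta> h s X x \<le> Z x"
  unfolding Vfun_def by (rule ess_sup_fam_least[OF finite_measure_axioms subalg]) auto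

lemma Vfun_ge_stop_now:
  assumes X: "X \<in> borel_measurable (F s)"
  shows "AE x in M. ennreal (X x) \<le> Vfun M F \<beta> h s X x"
proof -
  interpret sigma_finite_subalgebra M "F s" by (rule sigma_finite_subalgebra_F)
  have now: "(\<lambda>_. enat s) \<in> stopping_times_from M F s" by (simp add: stopping_times_from_def)
  have "(\<lambda>x. ennreal (X x)) \<in> borel_measurable (F s)" using X by measurable
  from Vfun_upper[OF now, of X] nn_cond_exp_F_meas[OF this]
  show ?thesis by eventually_elim (simp add: payoff_stop_now)
qed

lemma Vfun_ge_reward:
  assumes X: "X \<in> borel_measurable M"
  shows "AE x in M. ennreal (h (Suc s) x) \<le> Vfun M F \<beta> h s X x"
proof -
  interpret sigma_finite_subalgebra M "F s" by (rule sigma_finite_subalgebra_F)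
  have \<infinity>: "(\<lambda>_. \<infinity>) \<in> stopping_times_from M F s" by (simp add: stopping_times_from_def)
  have h: "(\<lambda>x. ennreal (h (Suc s) x)) \<in> borel_measurable (F s)"
    using h_predictable by measurable
  have "AE x in M. nn_cond_exp M (F s) (\<lambda>x. ennreal (h (Suc s) x)) x
      \<le> nn_cond_exp M (F s) (payoff \<beta> h s X (\<lambda>_. \<infinity>)) x"
    using measurable_F_imp_M[OF h] payoff_measurable[OF \<infinity> X]
    by (intro nn_cond_exp_mono AE_I2 payoff_never_stop_ge)
  with nn_cond_exp_F_meas[OF h] Vfun_upper[OF \<infinity>, of X]
  show ?thesis by eventually_elim simp
qed

lemma Vfun_mono_on:
  assumes A: "A \<in> sets (F s)" and X: "X \<in> borel_measurable (F s)" and Y: "Y \<in> borel_measurable (F s)"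
    and le: "\<And>x. x \<in> A \<Longrightarrow> Y x \<le> X x"
  shows "AE x in M. x \<in> A \<longrightarrow> Vfun M F \<beta> h s Y x \<le> Vfun M F \<beta> h s X x"
proof -
  interpret sigma_finite_subalgebra M "F s" by (rule sigma_finite_subalgebra_F)
  define Z where "Z x = (if x \<in> A then Vfun M F \<beta> h s X x else \<infinity>)" for x
  have "AE x in M. Vfun M F \<beta> h s Y x \<le> Z x"
  proof (rule Vfun_least)
    show "Z \<in> borel_measurable (F s)"
      unfolding Z_def using A Vfun_measurable by (intro measurable_If_set) auto
  next
    fix \<tau> assume \<tau>: "\<tau> \<in> stopping_times_from M F s"
    let ?PY = "payoff \<beta> h s Y \<tau>" and ?PX = "payoff \<beta> h s X \<tau>"
    have PY: "?PY \<in> borel_measurable M" and PX: "?PX \<in> borel_measurable M"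
      using payoff_measurable[OF \<tau>] measurable_F_imp_M X Y by auto
    have ind: "(\<lambda>x. indicator A x :: ennreal) \<in> borel_measurable (F s)" using A by measurable
    have "AE x in M. indicator A x * nn_cond_exp M (F s) ?PY x
        = nn_cond_exp M (F s) (\<lambda>x. indicator A x * ?PY x) x"
      by (rule nn_cond_exp_prod[OF ind PY])
    moreover have "AE x in M. nn_cond_exp M (F s) (\<lambda>x. indicator A x * ?PY x) x
        \<le> nn_cond_exp M (F s) ?PX x"
      using measurable_F_imp_M[OF ind] PY PX
      by (intro nn_cond_exp_mono AE_I2)
         (auto simp: indicator_def intro: payoff_mono[OF less_imp_le[OF beta_pos]] le)
    ultimately show "AE x in M. nn_cond_exp M (F s) ?PY x \<le> Z x"
      using Vfun_upper[OF \<tau>, of X] by eventually_elim (auto simp: Z_def)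
  qed
  then show ?thesis by eventually_elim (auto simp: Z_def)
qed

lemma Vfun_mono:
  assumes "X \<in> borel_measurable (F s)" "Y \<in> borel_measurable (F s)" "\<And>x. Y x \<le> X x"
  shows "AE x in M. Vfun M F \<beta> h s Y x \<le> Vfun M F \<beta> h s X x"
proof -
  have "AE x in M. x \<in> space (F s) \<longrightarrow> Vfun M F \<beta> h s Y x \<le> Vfun M F \<beta> h s X x"
    by (rule Vfun_mono_on) (use assms in auto)
  with AE_space show ?thesis by eventually_elim (simp add: space_F)
qed

lemma Vfun_le_const_plus_excess:
  assumes X: "X \<in> borel_measurable (F s)" and m: "0 \<le> m"
  shows "AE x in M. Vfun M F \<beta> h s X x \<le> Vfun M F \<beta> h s (\<lambda>_. m) x + ennreal (X x - m)"
proof (rule Vfun_least)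
  interpret sigma_finite_subalgebra M "F s" by (rule sigma_finite_subalgebra_F)
  have excess: "(\<lambda>x. ennreal (X x - m)) \<in> borel_measurable (F s)" using X by measurable
  then show "(\<lambda>x. Vfun M F \<beta> h s (\<lambda>_. m) x + ennreal (X x - m)) \<in> borel_measurable (F s)"
    using Vfun_measurable by measurable
  fix \<tau> assume \<tau>: "\<tau> \<in> stopping_times_from M F s"
  let ?PX = "payoff \<beta> h s X \<tau>" and ?Pm = "payoff \<beta> h s (\<lambda>_. m) \<tau>"
    and ?E = "\<lambda>x. ennreal (X x - m)"
  have PX: "?PX \<in> borel_measurable M" by (rule payoff_measurable[OF \<tau> measurable_F_imp_M[OF X]])
  have Pm: "?Pm \<in> borel_measurable M" by (rule payoff_measurable[OF \<tau>]) simp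
  have E: "?E \<in> borel_measurable M" by (rule measurable_F_imp_M[OF excess])
  have "AE x in M. nn_cond_exp M (F s) ?PX x \<le> nn_cond_exp M (F s) (\<lambda>x. ?Pm x + ?E x) x"
    using PX Pm E payoff_le_const_plus_excess[OF less_imp_le[OF beta_pos] less_imp_le[OF beta_less_1] m]
    by (intro nn_cond_exp_mono AE_I2) auto
  moreover have "AE x in M. nn_cond_exp M (F s) ?Pm x + nn_cond_exp M (F s) ?E x
      = nn_cond_exp M (F s) (\<lambda>x. ?Pm x + ?E x) x"
    by (rule nn_cond_exp_sum[OF Pm E])
  ultimately show "AE x in M. nn_cond_exp M (F s) ?PX x \<le> Vfun M F \<beta> h s (\<lambda>_. m) x + ?E x"
    using nn_cond_exp_F_meas[OF excess] Vfun_upper[OF \<tau>, of "\<lambda>_. m"]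
  proof eventually_elim
    case (elim x)
    then have "nn_cond_exp M (F s) ?PX x \<le> nn_cond_exp M (F s) ?Pm x + ?E x" by simp
    also have "\<dots> \<le> Vfun M F \<beta> h s (\<lambda>_. m) x + ?E x" using elim(4) by (rule add_right_mono)
    finally show ?case .
  qed
qed

definition gittins_candidates :: "nat \<Rightarrow> ('a \<Rightarrow> real) set" where
  "gittins_candidates s = {X. X \<in> borel_measurable (F s) \<and> (\<forall>x\<in>space M. 0 < X x)
      \<and> (AE x in M. ennreal (X x) < Vfun M F \<beta> h s X x)}"

lemma gittins_eq: "gittins M F \<beta> h s = ess_sup_fam M (F s) ((\<lambda>X x. ennreal (X x)) ` gittins_candidates s)"
  unfolding gittins_def gittins_candidates_def ..

lemma gittins_candidates_measurable:
  "(\<lambda>X x. ennreal (X x)) ` gittins_candidates s \<subseteq> borel_measurable (F s)"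
  unfolding gittins_candidates_def by auto

lemma Vfun_const_gt_of_candidate:
  assumes X: "X \<in> gittins_candidates s" and m: "0 \<le> m"
  shows "AE x in M. ennreal m < ennreal (X x) \<longrightarrow> ennreal m < Vfun M F \<beta> h s (\<lambda>_. m) x"
proof -
  have X_meas: "X \<in> borel_measurable (F s)" and "AE x in M. ennreal (X x) < Vfun M F \<beta> h s X x"
    using X unfolding gittins_candidates_def by auto
  from this(2) Vfun_le_const_plus_excess[OF X_meas m] show ?thesis
  proof eventually_elim
    case (elim x)
    show ?case
    proof
      assume "ennreal m < ennreal (X x)"
      then have "ennreal (X x - m) + ennreal m = ennreal (X x)"
        using m by (simp add: ennreal_less_iff flip: ennreal_plus)
      also have "\<dots> < Vfun M F \<beta> h s (\<lambda>_. m) x + ennreal (X x - m)"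
        using elim by (rule less_le_trans)
      finally show "ennreal m < Vfun M F \<beta> h s (\<lambda>_. m) x"
        by (simp add: add.commute ennreal_add_left_cancel_less)
    qed
  qed
qed

lemma gittins_gt_imp_Vfun_gt:
  assumes m: "0 \<le> m"
  shows "AE x in M. ennreal m < gittins M F \<beta> h s x \<longrightarrow> ennreal m < Vfun M F \<beta> h s (\<lambda>_. m) x"
proof -
  from ess_sup_fam_le_countable_SUP[OF finite_measure_axioms subalg gittins_candidates_measurable[of s]]
  obtain J where J: "countable J" "J \<subseteq> (\<lambda>X x. ennreal (X x)) ` gittins_candidates s"
    "AE x in M. gittins M F \<beta> h s x \<le> (SUP Y\<in>J. Y x)"
    unfolding gittins_eq by (elim exE conjE)
  have "AE x in M. \<forall>Y\<in>J. ennreal m < Y x \<longrightarrow> ennreal m < Vfun M F \<beta> h s (\<lambda>_. m) x"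
    using J(1,2) Vfun_const_gt_of_candidate[OF _ m] by (subst AE_ball_countable) auto
  with J(3) show ?thesis
  proof eventually_elim
    case (elim x)
    show ?case
    proof
      assume "ennreal m < gittins M F \<beta> h s x"
      then have "ennreal m < (SUP Y\<in>J. Y x)" using elim(1) by (rule less_le_trans)
      then obtain Y where "Y \<in> J" "ennreal m < Y x" by (auto simp: less_SUP_iff)
      with elim(2) show "ennreal m < Vfun M F \<beta> h s (\<lambda>_. m) x" by blast
    qed
  qed
qed

lemma gittins_ge_of_Vfun_gt:
  assumes c: "0 < c"
  shows "AE x in M. ennreal c < Vfun M F \<beta> h s (\<lambda>_. c) x \<longrightarrow> ennreal c \<le> gittins M F \<beta> h s x"
proof -
  define A where "A = {x\<in>space M. ennreal c < Vfun M F \<beta> h s (\<lambda>_. c) x}"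
  \<comment> \<open>off A, never stopping earns h (s+1) > X\<close>
  define X where "X x = (if x \<in> A then c else h (Suc s) x / 2)" for x
  have "{x\<in>space (F s). ennreal c < Vfun M F \<beta> h s (\<lambda>_. c) x} \<in> sets (F s)"
    using Vfun_measurable by measurable
  then have A: "A \<in> sets (F s)" unfolding A_def space_F .
  have X_meas: "X \<in> borel_measurable (F s)"
    unfolding X_def using A h_predictable by (intro measurable_If_set) auto
  have "AE x in M. x \<in> A \<longrightarrow> Vfun M F \<beta> h s (\<lambda>_. c) x \<le> Vfun M F \<beta> h s X x"
    by (rule Vfun_mono_on[OF A X_meas]) (auto simp: X_def)
  then have "AE x in M. ennreal (X x) < Vfun M F \<beta> h s X x"
    using Vfun_ge_reward[OF measurable_F_imp_M[OF X_meas], of s] AE_space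
  proof eventually_elim
    case (elim x)
    show ?case
    proof (cases "x \<in> A")
      case True
      then show ?thesis using elim(1) by (auto simp: X_def A_def intro: less_le_trans)
    next
      case False
      then have "ennreal (X x) < ennreal (h (Suc s) x)"
        using h_pos[OF elim(3)] by (intro ennreal_lessI) (auto simp: X_def)
      then show ?thesis using elim(2) by (rule less_le_trans)
    qed
  qed
  then have "X \<in> gittins_candidates s"
    unfolding gittins_candidates_def using X_meas c h_pos by (auto simp: X_def)
  then have "AE x in M. ennreal (X x) \<le> gittins M F \<beta> h s x"
    unfolding gittins_eq
    by (intro ess_sup_fam_upper[OF finite_measure_axioms subalg gittins_candidates_measurable]) auto
  with AE_space show ?thesis by eventually_elim (auto simp: X_def A_def)
qed

lemma Vfun_gt_imp_gittins_gt:
  assumes m: "0 \<le> m"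
  shows "AE x in M. ennreal m < Vfun M F \<beta> h s (\<lambda>_. m) x \<longrightarrow> ennreal m < gittins M F \<beta> h s x"
proof -
  let ?V = "\<lambda>c x. Vfun M F \<beta> h s (\<lambda>_. c) x"
  have "AE x in M. m < of_rat r \<longrightarrow> ?V m x \<le> ?V (of_rat r) x
      \<and> (ennreal (of_rat r) < ?V (of_rat r) x \<longrightarrow> ennreal (of_rat r) \<le> gittins M F \<beta> h s x)" for r
  proof (cases "m < of_rat r")
    case True
    with m have "AE x in M. ?V m x \<le> ?V (of_rat r) x" by (intro Vfun_mono) auto
    moreover have "AE x in M. ennreal (of_rat r) < ?V (of_rat r) x \<longrightarrow> ennreal (of_rat r) \<le> gittins M F \<beta> h s x"
      using True m by (intro gittins_ge_of_Vfun_gt) linarith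
    ultimately show ?thesis by eventually_elim simp
  qed simp
  then have "AE x in M. \<forall>r. m < of_rat r \<longrightarrow> ?V m x \<le> ?V (of_rat r) x
      \<and> (ennreal (of_rat r) < ?V (of_rat r) x \<longrightarrow> ennreal (of_rat r) \<le> gittins M F \<beta> h s x)"
    by (simp only: AE_all_countable) simp
  then show ?thesis
  proof eventually_elim
    case (elim x)
    show ?case
    proof
      assume "ennreal m < ?V m x"
      then obtain r where r: "ennreal m < ennreal (of_rat r)" "ennreal (of_rat r) < ?V m x"
        using ennreal_rat_dense by blast
      then have "m < of_rat r" using m by (simp add: ennreal_less_iff)
      with elim r(2) have "ennreal (of_rat r) \<le> gittins M F \<beta> h s x"
        using less_le_trans by blast
      with r(1) show "ennreal m < gittins M F \<beta> h s x" by (rule less_le_trans)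
    qed
  qed
qed

end

lemma sigma_opt_gt_iff:
  assumes V_ge: "\<And>s. ennreal m \<le> Vfun M F \<beta> h s (\<lambda>_. m) x"
  shows "enat \<theta> < sigma_opt M F \<beta> h t m x
    \<longleftrightarrow> (\<forall>s\<in>{t..\<theta>}. ennreal m < Vfun M F \<beta> h s (\<lambda>_. m) x)"
proof -
  let ?stop = "\<lambda>s. t \<le> s \<and> Vfun M F \<beta> h s (\<lambda>_. m) x = ennreal m"
  have gt_iff: "ennreal m < Vfun M F \<beta> h s (\<lambda>_. m) x \<longleftrightarrow> Vfun M F \<beta> h s (\<lambda>_. m) x \<noteq> ennreal m" for s
    using V_ge[of s] by (auto simp: le_less)
  show ?thesis
  proof (cases "\<exists>s. ?stop s")
    case True
    let ?L = "LEAST s. ?stop s"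
    have L: "?stop ?L" using LeastI_ex[OF True] .
    have "\<theta> < ?L \<longleftrightarrow> (\<forall>s\<in>{t..\<theta>}. \<not> ?stop s)"
    proof
      assume "\<theta> < ?L"
      then show "\<forall>s\<in>{t..\<theta>}. \<not> ?stop s" using Least_le[of ?stop] by force
    next
      assume "\<forall>s\<in>{t..\<theta>}. \<not> ?stop s"
      with L show "\<theta> < ?L" by (meson atLeastAtMost_iff not_le)
    qed
    with True show ?thesis by (simp add: sigma_opt_def gt_iff)
  next
    case False
    then show ?thesis by (auto simp: sigma_opt_def gt_iff)
  qed
qed

lemma gittins_low_gt_iff:
  "t \<le> \<theta> \<Longrightarrow> c < gittins_low M F \<beta> h t \<theta> x \<longleftrightarrow> (\<forall>s\<in>{t..\<theta>}. c < gittins M F \<beta> h s x)"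
  unfolding gittins_low_def by (subst Min_gr_iff) auto

theorem lemma3p3:
  fixes M :: "'a measure" and F :: "nat \<Rightarrow> 'a measure" and \<beta> :: real
    and h :: "nat \<Rightarrow> 'a \<Rightarrow> real" and m :: real and t \<theta> :: nat
  assumes "prob_space M" and "complete_measure M"
    and "filtration (space M) F" and "\<And>n. subalgebra M (F n)"
    and "0 < \<beta>" and "\<beta> < 1"
    and "\<And>n x. x \<in> space M \<Longrightarrow> 0 < h n x"
    and "\<And>n. h (Suc n) \<in> borel_measurable (F n)"
    and "(\<integral>\<^sup>+ x. (\<Sum>n. ennreal (\<beta> ^ n * h (Suc n) x)) \<partial>M) < \<infinity>"
    and "0 \<le> m" and "t \<le> \<theta>"
  shows "AE x in M.
     (enat \<theta> < sigma_opt M F \<beta> h t m x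
        \<longleftrightarrow> (\<forall>s\<in>{t..\<theta>}. ennreal m < Vfun M F \<beta> h s (\<lambda>_. m) x))
   \<and> ((\<forall>s\<in>{t..\<theta>}. ennreal m < Vfun M F \<beta> h s (\<lambda>_. m) x)
        \<longleftrightarrow> ennreal m < gittins_low M F \<beta> h t \<theta> x)"
proof -
  interpret gittins_model M F \<beta> h
    using assms(1,4-8) by (simp add: gittins_model_def gittins_model_axioms_def)
  have "AE x in M. ennreal m \<le> Vfun M F \<beta> h s (\<lambda>_. m) x
      \<and> (ennreal m < Vfun M F \<beta> h s (\<lambda>_. m) x \<longleftrightarrow> ennreal m < gittins M F \<beta> h s x)" for s
    using Vfun_ge_stop_now[OF borel_measurable_const, of m s] gittins_gt_imp_Vfun_gt[OF \<open>0 \<le> m\<close>, of s]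
      Vfun_gt_imp_gittins_gt[OF \<open>0 \<le> m\<close>, of s]
    by eventually_elim blast
  then have "AE x in M. \<forall>s. ennreal m \<le> Vfun M F \<beta> h s (\<lambda>_. m) x
      \<and> (ennreal m < Vfun M F \<beta> h s (\<lambda>_. m) x \<longleftrightarrow> ennreal m < gittins M F \<beta> h s x)"
    by (simp only: AE_all_countable) simp
  then show ?thesis
  proof eventually_elim
    case (elim x)
    then show ?case
      using sigma_opt_gt_iff[of m M F \<beta> h x] gittins_low_gt_iff[OF \<open>t \<le> \<theta>\<close>, of "ennreal m" M F \<beta> h x]
      by simp
  qed
qed

end
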